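(* Under Assumptions 1 and 2 (stated in the context), there exists a constant $L_1$ such that for all $i,j,k$, all $t_1,t_2$ and all $\theta$ in the (bounded) domain, $$|\text{dist}(b_{ij}(t_1,\theta),o_k)-\text{dist}(b_{ij}(t_2,\theta),o_k)|\le L_1|t_1-t_2|.$$
   Context: An articulated robot consists of finitely many rigid bodies. For a finite-dimensional trajectory parameter vector $\theta$ and $t\in[0,T]$, the $i$-th body occupies $b_i(t,\theta)\subset\mathbb{R}^3$; obstacles occupy $o\subset\mathbb{R}^3$. $\text{dist}(A,B)$ is the shortest Euclidean distance between sets. The constraints of interest are $\text{dist}(b_i(t,\theta),o)\ge d_0$ for all $i$ and $t\in[0,T]$. Assumption 1: there are finite decompositions $b_i(t,\theta)=\bigcup_j b_{ij}(t,\theta)$, $o=\bigcup_k o_k$ such that for every triple $(i,j,k)$ the function $(t,\theta)\mapsto\text{dist}(b_{ij}(t,\theta),o_k)$ is sufficiently smooth. Assumption 2: the feasible domain of $t$ and $\theta$ is bounded. *)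

theory Defs
  imports "HOL-Analysis.Analysis"
begin

definition C1_on :: "'a::euclidean_space set \<Rightarrow> ('a \<Rightarrow> real) \<Rightarrow> bool" where
  "C1_on S f \<longleftrightarrow>
     (\<exists>f'. (\<forall>x\<in>S. (f has_derivative blinfun_apply (f' x)) (at x)) \<and> continuous_on S f')"

end

theory Submission
  imports Defs
begin

text \<open>A \<open>C\<^sup>1\<close> function has a continuous, hence bounded, derivative on every compact set;
  on a convex compact set the mean value inequality turns this bound into a Lipschitz
  constant. Finitely many such functions share a common constant, and freezing \<open>\<theta>\<close> in a
  function Lipschitz in \<open>(t, \<theta>)\<close> leaves a function Lipschitz in \<open>t\<close>.\<close>

lemma C1_on_lipschitz_on_compact_convex:
  assumes "C1_on S f" "C \<subseteq> S" "compact C" "convex C"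
  obtains L where "L-lipschitz_on C f"
proof -
  obtain f' where deriv: "\<And>x. x \<in> S \<Longrightarrow> (f has_derivative blinfun_apply (f' x)) (at x)"
    and cont: "continuous_on S f'"
    using assms(1) unfolding C1_on_def by blast
  have "compact (f' ` C)"
    using compact_continuous_image[OF continuous_on_subset[OF cont assms(2)] assms(3)] .
  then obtain B where "B > 0" and B: "\<And>x. x \<in> C \<Longrightarrow> norm (f' x) \<le> B"
    by (auto dest!: compact_imp_bounded simp: bounded_pos)
  have "B-lipschitz_on C f"
  proof (rule bounded_derivative_imp_lipschitz[OF _ assms(4)])
    show "(f has_derivative blinfun_apply (f' x)) (at x within C)" if "x \<in> C" for x
      using deriv that assms(2) by (blast intro: has_derivative_at_withinI)
    show "onorm (blinfun_apply (f' x)) \<le> B" if "x \<in> C" for x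
      using B[OF that] by (simp add: norm_blinfun.rep_eq)
  qed (use \<open>B > 0\<close> in simp)
  then show thesis by (rule that)
qed

lemma finite_lipschitz_on_common_constant:
  assumes "finite A" "\<And>a. a \<in> A \<Longrightarrow> \<exists>L. L-lipschitz_on X (g a)"
  obtains L where "\<And>a. a \<in> A \<Longrightarrow> L-lipschitz_on X (g a)"
proof -
  obtain L where L: "\<And>a. a \<in> A \<Longrightarrow> (L a)-lipschitz_on X (g a)"
    using assms(2) by metis
  have "L a \<le> Max (L ` A)" if "a \<in> A" for a
    using assms(1) that by simp
  then show thesis
    using L by (blast intro: that lipschitz_on_le)
qed

lemma lipschitz_on_Times_slice:
  fixes f :: "'a::metric_space \<times> 'b::metric_space \<Rightarrow> 'c::metric_space"
  assumes "L-lipschitz_on (A \<times> B) f" "t1 \<in> A" "t2 \<in> A" "\<theta> \<in> B"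
  shows "dist (f (t1, \<theta>)) (f (t2, \<theta>)) \<le> L * dist t1 t2"
proof -
  have "dist (t1, \<theta>) (t2, \<theta>) = dist t1 t2"
    by (simp add: dist_Pair_Pair)
  then show ?thesis
    using lipschitz_onD[OF assms(1), of "(t1, \<theta>)" "(t2, \<theta>)"] assms(2-4) by simp
qed

theorem lemma1:
  fixes body :: "'i \<Rightarrow> real \<Rightarrow> real^'n \<Rightarrow> (real^3) set"
    and part :: "'i \<Rightarrow> 'j \<Rightarrow> real \<Rightarrow> real^'n \<Rightarrow> (real^3) set"
    and obs :: "(real^3) set"
    and obspart :: "'k \<Rightarrow> (real^3) set"
    and I :: "'i set" and J :: "'i \<Rightarrow> 'j set" and K :: "'k set"
    and T :: real and \<Theta> :: "(real^'n) set"
  assumes finI: "finite I"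
    and finJ: "\<And>i. i \<in> I \<Longrightarrow> finite (J i)"
    and finK: "finite K"
    and body_decomp: "\<And>i t \<theta>. i \<in> I \<Longrightarrow> body i t \<theta> = (\<Union>j\<in>J i. part i j t \<theta>)"
    and obs_decomp: "obs = (\<Union>k\<in>K. obspart k)"
    and smooth: "\<And>i j k. i \<in> I \<Longrightarrow> j \<in> J i \<Longrightarrow> k \<in> K \<Longrightarrow>
        C1_on UNIV (\<lambda>(t, \<theta>). setdist (part i j t \<theta>) (obspart k))"
    and bounded_dom: "bounded \<Theta>"
  shows "\<exists>L1. \<forall>i\<in>I. \<forall>j\<in>J i. \<forall>k\<in>K. \<forall>t1\<in>{0..T}. \<forall>t2\<in>{0..T}. \<forall>\<theta>\<in>\<Theta>.
           \<bar>setdist (part i j t1 \<theta>) (obspart k) - setdist (part i j t2 \<theta>) (obspart k)\<bar>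
             \<le> L1 * \<bar>t1 - t2\<bar>"
proof -
  obtain c R where \<Theta>: "\<Theta> \<subseteq> cball c R"
    using bounded_dom by (auto simp: bounded_subset_cball)
  define C where "C = {0..T} \<times> cball c R"
  have "compact C" "convex C"
    unfolding C_def by (simp_all add: compact_Times convex_Times)
  define d where "d = (\<lambda>(i, j, k) (t, \<theta>). setdist (part i j t \<theta>) (obspart k))"
  have "finite (SIGMA i:I. J i \<times> K)"
    using finI finJ finK by (simp add: finite_SigmaI)
  moreover have "\<exists>L. L-lipschitz_on C (d (i, j, k))" if "(i, j, k) \<in> (SIGMA i:I. J i \<times> K)" for i j k
  proof -
    have "C1_on UNIV (d (i, j, k))"
      using smooth that by (simp add: d_def)
    then show ?thesis
      using \<open>compact C\<close> \<open>convex C\<close> C1_on_lipschitz_on_compact_convex by blast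
  qed
  ultimately obtain L where L: "\<And>a. a \<in> (SIGMA i:I. J i \<times> K) \<Longrightarrow> L-lipschitz_on C (d a)"
    using finite_lipschitz_on_common_constant by (metis prod_cases3)
  have "\<bar>setdist (part i j t1 \<theta>) (obspart k) - setdist (part i j t2 \<theta>) (obspart k)\<bar> \<le> L * \<bar>t1 - t2\<bar>"
    if "i \<in> I" "j \<in> J i" "k \<in> K" "t1 \<in> {0..T}" "t2 \<in> {0..T}" "\<theta> \<in> \<Theta>" for i j k t1 t2 \<theta>
  proof -
    have "L-lipschitz_on ({0..T} \<times> cball c R) (d (i, j, k))"
      using L[of "(i, j, k)"] that(1-3) by (simp add: C_def)
    then have "dist (d (i, j, k) (t1, \<theta>)) (d (i, j, k) (t2, \<theta>)) \<le> L * dist t1 t2"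
      using that(4-6) \<Theta> by (blast intro: lipschitz_on_Times_slice)
    then show ?thesis
      by (simp add: d_def dist_real_def)
  qed
  then show ?thesis by blast
qed

end
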